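(* Suppose $\|\tau_l-\tau_i\|_\infty\ge B$ for all $l\neq i$, and $\mathbb{E}[S^z(0)]>0$. For $l\in\{1,\dots,N\}$ let $\mathrm{SNR}_y(\tau_l)=\|a_l\|^2/(\sigma^2B^d)$ where $\sigma^2=\mathbb{E}[z(t)^2]$, and $\mathrm{SNR}_{S^y}(\tau_l)=S^x(\tau_l)/\mathbb{E}[S^z(\tau_l)]$. Then $\mathrm{SNR}_{S^y}(\tau_l)=\gamma\cdot\mathrm{SNR}_y(\tau_l)$ for some $\gamma\ge1$ (not depending on $l$).
   Context: $C(t_0,\ell)=\{t\in\mathbb{R}^d:\|t-t_0\|_\infty<\ell/2\}$. Functions $\psi_1,\dots,\psi_M\in C^\infty(\mathbb{R}^d)$ are supported in $C(0,B)$ and orthonormal in $L^2(C(0,B))$. $x(t)=\sum_{i=1}^N\sum_{j=1}^M a_{ij}\psi_j(t-\tau_i)$, $a_i=(a_{i1},\dots,a_{iM})$. $z$ is a centered Gaussian stationary process on $\mathbb{R}^d$ with continuous sample paths. $\tilde\psi_j(t)=\psi_j(-t)$, $(f*\tilde\psi_j)(t)=\int_{\mathbb{R}^d} f(s)\psi_j(s-t)\,ds$, $S^f=\sum_{j=1}^M(f*\tilde\psi_j)^2$ for $f\in\{x,z\}$. *)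

theory Defs
  imports "HOL-Probability.Probability"
begin

definition cube :: "real^'d \<Rightarrow> real \<Rightarrow> (real^'d) set" where
  "cube t0 l = {t. infnorm (t - t0) < l / 2}"

text \<open>C-infinity: f lies in a family of everywhere (Frechet) differentiable functions
  closed under taking partial derivatives; i.e. all iterated partials exist and are differentiable.\<close>
definition smooth_fun :: "(real^'d \<Rightarrow> real) \<Rightarrow> bool" where
  "smooth_fun f \<longleftrightarrow> (\<exists>S. f \<in> S \<and> (\<forall>g\<in>S. (\<forall>x. g differentiable (at x)) \<and>
       (\<forall>i. (\<lambda>x. frechet_derivative g (at x) (axis i 1)) \<in> S)))"

definition corr :: "(real^'d \<Rightarrow> real) \<Rightarrow> (real^'d \<Rightarrow> real) \<Rightarrow> real^'d \<Rightarrow> real" where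
  "corr f \<psi> t = (LINT s|lborel. f s * \<psi> (s - t))"

definition Sfun :: "(nat \<Rightarrow> real^'d \<Rightarrow> real) \<Rightarrow> nat \<Rightarrow> (real^'d \<Rightarrow> real) \<Rightarrow> real^'d \<Rightarrow> real" where
  "Sfun \<psi> m f t = (\<Sum>j=1..m. (corr f (\<psi> j) t)\<^sup>2)"

definition centered_gaussian_rv :: "'w measure \<Rightarrow> ('w \<Rightarrow> real) \<Rightarrow> bool" where
  "centered_gaussian_rv M X \<longleftrightarrow> X \<in> borel_measurable M \<and>
     ((\<exists>\<sigma>>0. distributed M lborel X (\<lambda>x. ennreal (normal_density 0 \<sigma> x)))
      \<or> (AE \<omega> in M. X \<omega> = 0))"

definition centered_gaussian_process :: "'w measure \<Rightarrow> ('t \<Rightarrow> 'w \<Rightarrow> real) \<Rightarrow> bool" where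
  "centered_gaussian_process M z \<longleftrightarrow>
     (\<forall>(n::nat) (ts::nat \<Rightarrow> 't) (c::nat \<Rightarrow> real).
        centered_gaussian_rv M (\<lambda>\<omega>. \<Sum>i<n. c i * z (ts i) \<omega>))"

definition stationary_process :: "'w measure \<Rightarrow> ('t::plus \<Rightarrow> 'w \<Rightarrow> real) \<Rightarrow> bool" where
  "stationary_process M z \<longleftrightarrow>
     (\<forall>(n::nat) (ts::nat \<Rightarrow> 't) h.
        distr M (PiM {..<n} (\<lambda>_. borel)) (\<lambda>\<omega>. \<lambda>i\<in>{..<n}. z (ts i + h) \<omega>)
      = distr M (PiM {..<n} (\<lambda>_. borel)) (\<lambda>\<omega>. \<lambda>i\<in>{..<n}. z (ts i) \<omega>))"

end

theory Submission
  imports Defs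
begin

text \<open>
  The shifted windows \<open>\<psi>\<^sub>j(\<cdot> - \<tau>\<^sub>l)\<close> live in the cube \<open>C(\<tau>\<^sub>l, B)\<close>, and the cubes around
  distinct pulse locations are disjoint, so only the \<open>l\<close>-th pulse contributes to the correlations at
  \<open>\<tau>\<^sub>l\<close> and orthonormality gives \<open>S\<^sup>x(\<tau>\<^sub>l) = \<parallel>a\<^sub>l\<parallel>\<^sup>2\<close>.
  For the noise, Fubini turns \<open>E[S\<^sup>z(t)]\<close> into \<open>\<Sum>\<^sub>j \<integral>\<integral> \<psi>\<^sub>j(s) \<psi>\<^sub>j(s') E[z(s) z(s')]\<close>, which by stationarity
  does not depend on \<open>t\<close>; pathwise, Bessel's inequality on the cube bounds \<open>S\<^sup>z(0)\<close> by
  \<open>\<integral>\<^sub>C z\<^sup>2\<close>, whose expectation is \<open>\<sigma>\<^sup>2 B\<^sup>d\<close>. Hence \<open>\<gamma> = \<sigma>\<^sup>2 B\<^sup>d / E[S\<^sup>z(0)] \<ge> 1\<close> works for every \<open>l\<close>.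
\<close>

section \<open>Cubes and integrability on \<open>\<real>\<^sup>d\<close>\<close>

lemma infnorm_less_iff_cart:
  fixes x :: "real^'n"
  shows "infnorm x < r \<longleftrightarrow> (\<forall>i. \<bar>x$i\<bar> < r)"
proof -
  have "infnorm x = Max (range (\<lambda>i. \<bar>x$i\<bar>))"
    unfolding infnorm_cart by (simp add: full_SetCompr_eq cSup_eq_Max)
  then show ?thesis by simp
qed

lemma cube_0_eq_box: "cube (0::real^'d) B = box (\<chi> i. - (B/2)) (\<chi> i. B/2)"
  unfolding cube_def set_eq_iff mem_Collect_eq diff_zero infnorm_less_iff_cart mem_box_cart
    vec_lambda_beta abs_less_iff by (meson minus_less_iff)

lemma cube_0_sets [measurable]: "cube (0::real^'d) B \<in> sets borel"
  by (simp add: cube_0_eq_box)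

lemma bounded_cube_0: "bounded (cube (0::real^'d) B)"
  by (simp add: cube_0_eq_box)

lemma emeasure_cube_0:
  assumes "0 < B"
  shows "emeasure lborel (cube (0::real^'d) B) = ennreal (B ^ CARD('d))"
proof -
  have "emeasure lborel (cube (0::real^'d) B)
      = (\<Prod>b\<in>(Basis::(real^'d) set). ((\<chi> i. B/2) - (\<chi> i. - (B/2))) \<bullet> b)"
    unfolding cube_0_eq_box
    by (rule emeasure_lborel_box) (use assms in \<open>auto simp: Basis_vec_def inner_axis\<close>)
  also have "\<dots> = ennreal (\<Prod>b\<in>(Basis::(real^'d) set). B)"
    by (intro arg_cong[where f=ennreal] prod.cong refl) (auto simp: Basis_vec_def inner_axis)
  finally show ?thesis by simp
qed

lemma cube_translates_disjoint:
  fixes p q u :: "real^'d"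
  assumes "B \<le> infnorm (p - q)" and "u - p \<in> cube 0 B"
  shows "u - q \<notin> cube 0 B"
proof
  assume "u - q \<in> cube 0 B"
  with assms(2) have "infnorm (u - q) < B/2" "infnorm (u - p) < B/2"
    by (auto simp: cube_def)
  moreover have "infnorm (p - q) \<le> infnorm (u - q) + infnorm (p - u)"
    using infnorm_triangle[of "u - q" "p - u"] by simp
  ultimately show False using assms(1) infnorm_sub[of p u] by linarith
qed

lemma smooth_fun_continuous:
  assumes "smooth_fun f"
  shows "continuous_on UNIV f"
proof -
  from assms obtain S where "f \<in> S" "\<forall>g\<in>S. \<forall>x. g differentiable (at x)"
    unfolding smooth_fun_def by blast
  then show ?thesis
    by (intro continuous_at_imp_continuous_on ballI differentiable_imp_continuous_within) auto
qed

lemma integrable_continuous_bounded_support: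
  fixes f :: "real^'d \<Rightarrow> real"
  assumes "continuous_on UNIV f" and "bounded K" and "\<And>t. t \<notin> K \<Longrightarrow> f t = 0"
  shows "integrable lborel f"
proof -
  obtain r x0 where r: "K \<subseteq> cball x0 r"
    using \<open>bounded K\<close> bounded_subset_cball by blast
  have "integrable lborel (\<lambda>x. indicator (cball x0 r) x *\<^sub>R f x)"
    by (rule borel_integrable_compact) (auto intro: continuous_on_subset[OF assms(1)])
  moreover have "(\<lambda>x. indicator (cball x0 r) x *\<^sub>R f x) = f"
    using r assms(3) by (auto simp: fun_eq_iff indicator_def subset_iff)
  ultimately show ?thesis by simp
qed

lemma integrable_indicator_continuous:
  fixes f :: "real^'d \<Rightarrow> real"
  assumes "continuous_on UNIV f" and "bounded C" and "C \<in> sets borel"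
  shows "integrable lborel (\<lambda>s. indicator C s * f s)"
proof -
  have "integrable lborel (\<lambda>x. indicator (closure C) x *\<^sub>R f x)"
    by (rule borel_integrable_compact)
      (auto intro: continuous_on_subset[OF assms(1)] simp: assms(2))
  then have "integrable lborel (\<lambda>x. indicator C x *\<^sub>R (indicator (closure C) x *\<^sub>R f x))"
    by (rule integrable_mult_indicator[OF assms(3)[folded sets_lborel]])
  moreover have "(\<lambda>x. indicator C x *\<^sub>R (indicator (closure C) x *\<^sub>R f x)) = (\<lambda>s. indicator C s * f s)"
    using closure_subset[of C] by (auto simp: fun_eq_iff indicator_def)
  ultimately show ?thesis by simp
qed

lemma lborel_integral_translate:
  fixes f :: "'a::euclidean_space \<Rightarrow> real"
  assumes "f \<in> borel_measurable borel"
  shows "(LINT s|lborel. f (s - c)) = (LINT s|lborel. f s)"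
proof -
  have "(LINT s|lborel. f s) = (LINT s|distr lborel borel ((+) (- c)). f s)"
    by (simp add: lborel_distr_plus)
  also have "\<dots> = (LINT s|lborel. f (- c + s))"
    by (rule integral_distr) (use assms in auto)
  finally show ?thesis by simp
qed

lemma LIMSEQ_floor_mult_divide:
  fixes x :: real
  shows "(\<lambda>n. real_of_int \<lfloor>real (Suc n) * x\<rfloor> / real (Suc n)) \<longlonglongrightarrow> x"
proof (rule tendsto_sandwich[where f="\<lambda>n. x - 1 / real (Suc n)" and h="\<lambda>n. x"])
  have "(\<lambda>n. 1 / real (Suc n)) \<longlonglongrightarrow> 0"
    by (rule LIMSEQ_Suc[OF lim_const_over_n])
  then show "(\<lambda>n. x - 1 / real (Suc n)) \<longlonglongrightarrow> x"
    using tendsto_diff[of "\<lambda>_. x" x sequentially] by force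
  show "\<forall>\<^sub>F n in sequentially. x - 1 / real (Suc n) \<le> real_of_int \<lfloor>real (Suc n) * x\<rfloor> / real (Suc n)"
  proof (intro always_eventually allI)
    fix n
    have "real (Suc n) * x - 1 \<le> real_of_int \<lfloor>real (Suc n) * x\<rfloor>" by linarith
    then have "(real (Suc n) * x - 1) / real (Suc n) \<le> real_of_int \<lfloor>real (Suc n) * x\<rfloor> / real (Suc n)"
      by (intro divide_right_mono) auto
    then show "x - 1 / real (Suc n) \<le> real_of_int \<lfloor>real (Suc n) * x\<rfloor> / real (Suc n)"
      by (simp add: diff_divide_distrib)
  qed
  show "\<forall>\<^sub>F n in sequentially. real_of_int \<lfloor>real (Suc n) * x\<rfloor> / real (Suc n) \<le> x"
  proof (intro always_eventually allI)
    fix n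
    have "real_of_int \<lfloor>real (Suc n) * x\<rfloor> \<le> real (Suc n) * x" by linarith
    then show "real_of_int \<lfloor>real (Suc n) * x\<rfloor> / real (Suc n) \<le> x"
      by (simp add: field_simps)
  qed
qed simp

section \<open>Second moments of integrals of a process\<close>

text \<open>The process is the pointwise limit of its samples on the countable grids \<open>\<int>\<^sup>d / (n+1)\<close>.\<close>
lemma borel_measurable_continuous_paths:
  fixes z :: "real^'d \<Rightarrow> 'w \<Rightarrow> real"
  assumes measurable: "\<And>t. z t \<in> borel_measurable M"
    and continuous: "\<And>\<omega>. \<omega> \<in> space M \<Longrightarrow> continuous_on UNIV (\<lambda>t. z t \<omega>)"
  shows "(\<lambda>x. z (snd x) (fst x)) \<in> borel_measurable (M \<Otimes>\<^sub>M lborel)"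
proof (rule borel_measurable_LIMSEQ_real)
  define k :: "nat \<Rightarrow> real^'d \<Rightarrow> int^'d" where "k n s = (\<chi> i. \<lfloor>real (Suc n) * s$i\<rfloor>)" for n s
  define p :: "nat \<Rightarrow> int^'d \<Rightarrow> real^'d" where "p n a = (\<chi> i. real_of_int (a$i) / real (Suc n))" for n a
  show "(\<lambda>x. z (p n (k n (snd x))) (fst x)) \<in> borel_measurable (M \<Otimes>\<^sub>M lborel)" for n
  proof (rule measurable_compose_countable[where f="\<lambda>a x. z (p n a) (fst x)"])
    show "(\<lambda>x. z (p n a) (fst x)) \<in> borel_measurable (M \<Otimes>\<^sub>M lborel)" for a
      using measurable by measurable
    have "k n \<in> borel \<rightarrow>\<^sub>M count_space UNIV"
    proof (subst measurable_count_space_eq2_countable, safe)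
      fix a :: "int^'d"
      have "k n -` {a} = {s. \<forall>i. \<lfloor>real (Suc n) * s$i\<rfloor> = a$i}"
        by (auto simp: k_def vec_eq_iff)
      moreover have "{s::real^'d. \<forall>i. \<lfloor>real (Suc n) * s$i\<rfloor> = a$i} \<in> sets borel"
        by measurable
      ultimately show "k n -` {a} \<inter> space borel \<in> sets borel" by simp
    qed auto
    then show "(\<lambda>x. k n (snd x)) \<in> M \<Otimes>\<^sub>M lborel \<rightarrow>\<^sub>M count_space UNIV"
      by measurable
  qed
  fix x :: "'w \<times> (real^'d)"
  assume "x \<in> space (M \<Otimes>\<^sub>M lborel)"
  then have "continuous_on UNIV (\<lambda>t. z t (fst x))"
    by (intro continuous) (auto simp: space_pair_measure)
  moreover have "(\<lambda>n. p n (k n (snd x))) \<longlonglongrightarrow> snd x"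
    by (rule vec_tendstoI, unfold p_def k_def vec_lambda_beta, rule LIMSEQ_floor_mult_divide)
  ultimately show "(\<lambda>n. z (p n (k n (snd x))) (fst x)) \<longlonglongrightarrow> z (snd x) (fst x)"
    by (rule continuous_on_tendsto_compose) auto
qed

lemma
  fixes g :: "'a::euclidean_space \<Rightarrow> real"
  assumes g: "integrable lborel g"
  shows integrable_lborel_pair_mult: "integrable (lborel \<Otimes>\<^sub>M lborel) (\<lambda>x. g (fst x) * g (snd x))"
    and integral_lborel_pair_mult:
      "(LINT x|(lborel \<Otimes>\<^sub>M lborel). g (fst x) * g (snd x)) = (LINT s|lborel. g s)\<^sup>2"
proof -
  have [measurable]: "g \<in> borel_measurable lborel" using g by auto
  have "(\<integral>\<^sup>+x. ennreal (norm (g (fst x) * g (snd x))) \<partial>(lborel \<Otimes>\<^sub>M lborel))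
      = (\<integral>\<^sup>+s. ennreal (norm (g s)) * (\<integral>\<^sup>+t. ennreal (norm (g t)) \<partial>lborel) \<partial>lborel)"
    by (subst lborel.nn_integral_fst[symmetric])
      (auto simp: abs_mult ennreal_mult nn_integral_cmult)
  also have "\<dots> = (\<integral>\<^sup>+s. ennreal (norm (g s)) \<partial>lborel) * (\<integral>\<^sup>+t. ennreal (norm (g t)) \<partial>lborel)"
    by (simp add: nn_integral_multc)
  also have "\<dots> < \<infinity>"
    using g by (simp add: integrable_iff_bounded ennreal_mult_less_top)
  finally show int: "integrable (lborel \<Otimes>\<^sub>M lborel) (\<lambda>x. g (fst x) * g (snd x))"
    by (intro integrableI_bounded) auto
  show "(LINT x|(lborel \<Otimes>\<^sub>M lborel). g (fst x) * g (snd x)) = (LINT s|lborel. g s)\<^sup>2"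
    using lborel_pair.integral_fst'[OF int] by (simp add: power2_eq_square)
qed

lemma (in prob_space) nn_integral_abs_mult_le:
  assumes [measurable]: "X \<in> borel_measurable M" "Y \<in> borel_measurable M"
    and "integrable M (\<lambda>\<omega>. (X \<omega>)\<^sup>2)" "integrable M (\<lambda>\<omega>. (Y \<omega>)\<^sup>2)"
    and "expectation (\<lambda>\<omega>. (X \<omega>)\<^sup>2) \<le> K" "expectation (\<lambda>\<omega>. (Y \<omega>)\<^sup>2) \<le> K"
  shows "(\<integral>\<^sup>+\<omega>. ennreal \<bar>X \<omega> * Y \<omega>\<bar> \<partial>M) \<le> ennreal K"
proof -
  have am_gm: "\<bar>a * b\<bar> \<le> (a\<^sup>2 + b\<^sup>2) / 2" for a b :: real
    using sum_squares_bound[of "\<bar>a\<bar>" "\<bar>b\<bar>"] by (simp add: abs_mult)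
  have "(\<integral>\<^sup>+\<omega>. ennreal \<bar>X \<omega> * Y \<omega>\<bar> \<partial>M) \<le> (\<integral>\<^sup>+\<omega>. ennreal (((X \<omega>)\<^sup>2 + (Y \<omega>)\<^sup>2) / 2) \<partial>M)"
    by (intro nn_integral_mono ennreal_leI am_gm)
  also have "\<dots> = ennreal ((expectation (\<lambda>\<omega>. (X \<omega>)\<^sup>2) + expectation (\<lambda>\<omega>. (Y \<omega>)\<^sup>2)) / 2)"
    using assms by (subst nn_integral_eq_integral) auto
  also have "\<dots> \<le> ennreal K"
    using assms by (intro ennreal_leI) simp
  finally show ?thesis .
qed

context prob_space
begin

lemma integrable_path_product:
  fixes w :: "'b::euclidean_space \<Rightarrow> 'a \<Rightarrow> real"
  assumes W [measurable]: "(\<lambda>x. w (snd x) (fst x)) \<in> borel_measurable (M \<Otimes>\<^sub>M lborel)"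
    and square_integrable: "\<And>s. integrable M (\<lambda>\<omega>. (w s \<omega>)\<^sup>2)"
    and bounded: "\<And>s. expectation (\<lambda>\<omega>. (w s \<omega>)\<^sup>2) \<le> K"
    and \<phi>: "integrable lborel \<phi>"
  shows "integrable (M \<Otimes>\<^sub>M (lborel \<Otimes>\<^sub>M lborel))
           (\<lambda>(\<omega>, x). w (fst x) \<omega> * \<phi> (fst x) * (w (snd x) \<omega> * \<phi> (snd x)))"
proof -
  interpret P: pair_sigma_finite M "lborel \<Otimes>\<^sub>M lborel :: ('b \<times> 'b) measure"
    by (intro pair_sigma_finite.intro sigma_finite_measure_axioms sigma_finite_pair_measure)
      unfold_locales
  have [measurable]: "\<phi> \<in> borel_measurable lborel" using \<phi> by auto
  have w [measurable]: "w s \<in> borel_measurable M" for s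
    using measurable_compose[OF measurable_Pair2'[of s lborel M] W] by simp
  have [measurable]: "(\<lambda>y. w (f (snd y)) (fst y)) \<in> borel_measurable (M \<Otimes>\<^sub>M (lborel \<Otimes>\<^sub>M lborel))"
    if [measurable]: "f \<in> (lborel \<Otimes>\<^sub>M lborel :: ('b \<times> 'b) measure) \<rightarrow>\<^sub>M lborel" for f
  proof -
    have "(\<lambda>y. (fst y, f (snd y))) \<in> M \<Otimes>\<^sub>M (lborel \<Otimes>\<^sub>M lborel) \<rightarrow>\<^sub>M M \<Otimes>\<^sub>M (lborel :: 'b measure)"
      by measurable
    from measurable_compose[OF this W] show ?thesis by simp
  qed
  have "(\<integral>\<^sup>+y. ennreal (norm (case y of (\<omega>, x) \<Rightarrow> w (fst x) \<omega> * \<phi> (fst x) * (w (snd x) \<omega> * \<phi> (snd x))))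
           \<partial>(M \<Otimes>\<^sub>M (lborel \<Otimes>\<^sub>M lborel)))
      = (\<integral>\<^sup>+x. \<integral>\<^sup>+\<omega>. ennreal \<bar>\<phi> (fst x) * \<phi> (snd x)\<bar> * ennreal \<bar>w (fst x) \<omega> * w (snd x) \<omega>\<bar> \<partial>M
           \<partial>(lborel \<Otimes>\<^sub>M lborel))"
    by (subst P.nn_integral_snd[symmetric])
      (auto simp: case_prod_beta abs_mult ennreal_mult[symmetric] mult_ac intro!: nn_integral_cong)
  also have "\<dots> \<le> (\<integral>\<^sup>+x. ennreal \<bar>\<phi> (fst x) * \<phi> (snd x)\<bar> * ennreal K \<partial>(lborel \<Otimes>\<^sub>M lborel))"
    by (intro nn_integral_mono)
      (auto simp: nn_integral_cmult intro!: mult_left_mono nn_integral_abs_mult_le square_integrable bounded)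
  also have "\<dots> < \<infinity>"
    using integrable_lborel_pair_mult[OF \<phi>]
    by (simp add: nn_integral_multc integrable_iff_bounded ennreal_mult_less_top)
  finally show ?thesis
    by (intro integrableI_bounded) auto
qed

lemma
  fixes w :: "'b::euclidean_space \<Rightarrow> 'a \<Rightarrow> real"
  assumes W: "(\<lambda>x. w (snd x) (fst x)) \<in> borel_measurable (M \<Otimes>\<^sub>M lborel)"
    and square_integrable: "\<And>s. integrable M (\<lambda>\<omega>. (w s \<omega>)\<^sup>2)"
    and bounded: "\<And>s. expectation (\<lambda>\<omega>. (w s \<omega>)\<^sup>2) \<le> K"
    and \<phi>: "integrable lborel \<phi>"
    and path_integrable: "\<And>\<omega>. \<omega> \<in> space M \<Longrightarrow> integrable lborel (\<lambda>s. w s \<omega> * \<phi> s)"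
  shows integrable_square_path_integral:
      "integrable M (\<lambda>\<omega>. (LINT s|lborel. w s \<omega> * \<phi> s)\<^sup>2)"
    and expectation_square_path_integral:
      "expectation (\<lambda>\<omega>. (LINT s|lborel. w s \<omega> * \<phi> s)\<^sup>2)
     = (LINT x|(lborel \<Otimes>\<^sub>M lborel). \<phi> (fst x) * \<phi> (snd x) * expectation (\<lambda>\<omega>. w (fst x) \<omega> * w (snd x) \<omega>))"
proof -
  interpret P: pair_sigma_finite M "lborel \<Otimes>\<^sub>M lborel :: ('b \<times> 'b) measure"
    by (intro pair_sigma_finite.intro sigma_finite_measure_axioms sigma_finite_pair_measure)
      unfold_locales
  define g where "g \<omega> x = w (fst x) \<omega> * \<phi> (fst x) * (w (snd x) \<omega> * \<phi> (snd x))" for \<omega> x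
  have g: "integrable (M \<Otimes>\<^sub>M (lborel \<Otimes>\<^sub>M lborel)) (case_prod g)"
    unfolding g_def by (rule integrable_path_product[OF W square_integrable bounded \<phi>])
  have Fubini_path: "(LINT x|(lborel \<Otimes>\<^sub>M lborel). g \<omega> x) = (LINT s|lborel. w s \<omega> * \<phi> s)\<^sup>2"
    if "\<omega> \<in> space M" for \<omega>
    using integral_lborel_pair_mult[OF path_integrable[OF that]] by (simp add: g_def)
  show "integrable M (\<lambda>\<omega>. (LINT s|lborel. w s \<omega> * \<phi> s)\<^sup>2)"
    using P.integrable_fst'[OF g] Fubini_path by (simp cong: Bochner_Integration.integrable_cong)
  have "expectation (\<lambda>\<omega>. (LINT s|lborel. w s \<omega> * \<phi> s)\<^sup>2)
      = expectation (\<lambda>\<omega>. LINT x|(lborel \<Otimes>\<^sub>M lborel). g \<omega> x)"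
    using Fubini_path by (intro Bochner_Integration.integral_cong) auto
  also have "\<dots> = (LINT x|(lborel \<Otimes>\<^sub>M lborel). expectation (\<lambda>\<omega>. g \<omega> x))"
    using P.integral_fst'[OF g] P.integral_snd[OF g] by simp
  also have "\<dots> = (LINT x|(lborel \<Otimes>\<^sub>M lborel).
                    \<phi> (fst x) * \<phi> (snd x) * expectation (\<lambda>\<omega>. w (fst x) \<omega> * w (snd x) \<omega>))"
    by (simp add: g_def mult_ac)
  finally show "expectation (\<lambda>\<omega>. (LINT s|lborel. w s \<omega> * \<phi> s)\<^sup>2)
     = (LINT x|(lborel \<Otimes>\<^sub>M lborel). \<phi> (fst x) * \<phi> (snd x) * expectation (\<lambda>\<omega>. w (fst x) \<omega> * w (snd x) \<omega>))" .
qed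

end

section \<open>Centered Gaussian and stationary processes\<close>

lemma centered_gaussian_process_rv:
  assumes "centered_gaussian_process M z"
  shows "centered_gaussian_rv M (z t)"
  using assms[unfolded centered_gaussian_process_def, rule_format, of "\<lambda>_. 1" "\<lambda>_. t" 1]
  by simp

lemma (in prob_space) centered_gaussian_rv_square_integrable:
  assumes "centered_gaussian_rv M X"
  shows "integrable M (\<lambda>\<omega>. (X \<omega>)\<^sup>2)"
proof -
  have [measurable]: "X \<in> borel_measurable M"
    using assms by (simp add: centered_gaussian_rv_def)
  from assms consider \<sigma> where "0 < \<sigma>" "distributed M lborel X (\<lambda>x. ennreal (normal_density 0 \<sigma> x))"
    | "AE \<omega> in M. X \<omega> = 0"
    unfolding centered_gaussian_rv_def by blast
  then show ?thesis
  proof cases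
    case (1 \<sigma>)
    then have "integrable lborel (\<lambda>x. normal_density 0 \<sigma> x * x\<^sup>2)"
      using integrable_normal_moment[where \<mu>=0 and \<sigma>=\<sigma> and k=2] by simp
    then show ?thesis
      using distributed_integrable[OF 1(2), of "\<lambda>x. x\<^sup>2"] by simp
  next
    case 2
    show ?thesis
      by (rule integrable_cong_AE_imp[of _ "\<lambda>_. 0"]) (use 2 in auto)
  qed
qed

lemma stationary_process_integral_shift:
  fixes z :: "'t::plus \<Rightarrow> 'w \<Rightarrow> real" and ts :: "nat \<Rightarrow> 't" and g :: "(nat \<Rightarrow> real) \<Rightarrow> real"
  assumes "stationary_process M z" and "\<And>t. z t \<in> borel_measurable M"
    and "g \<in> borel_measurable (PiM {..<n} (\<lambda>_. borel))"
  shows "(LINT \<omega>|M. g (\<lambda>i\<in>{..<n}. z (ts i + h) \<omega>)) = (LINT \<omega>|M. g (\<lambda>i\<in>{..<n}. z (ts i) \<omega>))"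
proof -
  have shifted: "(\<lambda>\<omega>. \<lambda>i\<in>{..<n}. z (ts i + h) \<omega>) \<in> M \<rightarrow>\<^sub>M PiM {..<n} (\<lambda>_. borel)"
    and unshifted: "(\<lambda>\<omega>. \<lambda>i\<in>{..<n}. z (ts i) \<omega>) \<in> M \<rightarrow>\<^sub>M PiM {..<n} (\<lambda>_. borel)"
    using assms(2) by (auto intro!: measurable_restrict)
  have "distr M (PiM {..<n} (\<lambda>_. borel)) (\<lambda>\<omega>. \<lambda>i\<in>{..<n}. z (ts i + h) \<omega>)
      = distr M (PiM {..<n} (\<lambda>_. borel)) (\<lambda>\<omega>. \<lambda>i\<in>{..<n}. z (ts i) \<omega>)"
    using assms(1) unfolding stationary_process_def by blast
  then show ?thesis
    using integral_distr[OF shifted assms(3)] integral_distr[OF unshifted assms(3)] by simp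
qed

lemma
  fixes z :: "'t::monoid_add \<Rightarrow> 'w \<Rightarrow> real"
  assumes "stationary_process M z" and "\<And>t. z t \<in> borel_measurable M"
  shows stationary_process_square_moment: "(LINT \<omega>|M. (z t \<omega>)\<^sup>2) = (LINT \<omega>|M. (z 0 \<omega>)\<^sup>2)"
    and stationary_process_covariance_shift:
      "(LINT \<omega>|M. z (s + h) \<omega> * z (t + h) \<omega>) = (LINT \<omega>|M. z s \<omega> * z t \<omega>)"
proof -
  have "(\<lambda>f. (f (0::nat))\<^sup>2 :: real) \<in> borel_measurable (PiM {..<1} (\<lambda>_. borel))"
    by measurable
  from stationary_process_integral_shift[OF assms this, of "\<lambda>_. 0" t]
  show "(LINT \<omega>|M. (z t \<omega>)\<^sup>2) = (LINT \<omega>|M. (z 0 \<omega>)\<^sup>2)"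
    by simp
  have "(\<lambda>f. f (0::nat) * f 1 :: real) \<in> borel_measurable (PiM {..<2} (\<lambda>_. borel))"
    by measurable
  from stationary_process_integral_shift[OF assms this, of "\<lambda>i. if i = 0 then s else t" h]
  show "(LINT \<omega>|M. z (s + h) \<omega> * z (t + h) \<omega>) = (LINT \<omega>|M. z s \<omega> * z t \<omega>)"
    by simp
qed

section \<open>An orthonormal system supported on a cube\<close>

locale orthonormal_cube_system =
  fixes \<psi> :: "nat \<Rightarrow> real^'d \<Rightarrow> real" and m :: nat and B :: real
  assumes continuous_\<psi>: "j \<in> {1..m} \<Longrightarrow> continuous_on UNIV (\<psi> j)"
    and \<psi>_eq_0: "j \<in> {1..m} \<Longrightarrow> t \<notin> cube 0 B \<Longrightarrow> \<psi> j t = 0"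
    and orthonormal:
      "j \<in> {1..m} \<Longrightarrow> k \<in> {1..m} \<Longrightarrow>
         (LINT t:cube 0 B|lborel. \<psi> j t * \<psi> k t) = (if j = k then 1 else 0)"
begin

lemma B_pos:
  assumes "1 \<le> m"
  shows "0 < B"
proof (rule ccontr)
  assume "\<not> 0 < B"
  then have "t \<notin> cube 0 B" for t :: "real^'d"
    using infnorm_pos_le[of t] by (simp add: cube_def)
  then have "cube (0::real^'d) B = {}"
    by blast
  then show False
    using orthonormal[of 1 1] assms by (simp add: set_lebesgue_integral_def)
qed

lemma continuous_\<psi>_shift: "j \<in> {1..m} \<Longrightarrow> continuous_on UNIV (\<lambda>s. \<psi> j (s - p))"
  by (rule continuous_on_compose2[OF continuous_\<psi>]) (auto intro!: continuous_intros)

lemma integrable_mult_\<psi>_shift: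
  assumes "j \<in> {1..m}" and "continuous_on UNIV g"
  shows "integrable lborel (\<lambda>s. g s * \<psi> j (s - p))"
proof (rule integrable_continuous_bounded_support)
  show "continuous_on UNIV (\<lambda>s. g s * \<psi> j (s - p))"
    by (intro continuous_on_mult assms continuous_\<psi>_shift)
  show "bounded ((\<lambda>x. p + x) ` cube 0 B)"
    by (rule bounded_translation[OF bounded_cube_0])
  show "g t * \<psi> j (t - p) = 0" if "t \<notin> (\<lambda>x. p + x) ` cube 0 B" for t
  proof -
    have "t - p \<notin> cube 0 B"
      using that by (metis add.commute diff_add_cancel image_eqI)
    then show ?thesis by (simp add: \<psi>_eq_0[OF assms(1)])
  qed
qed

lemma integral_mult_\<psi>_eq_cube:
  "j \<in> {1..m} \<Longrightarrow>
     (LINT s|lborel. f s * \<psi> j s) = (LINT s|lborel. indicator (cube 0 B) s * (f s * \<psi> j s))"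
  by (intro Bochner_Integration.integral_cong) (auto simp: indicator_def \<psi>_eq_0)

lemma integral_cube_\<psi>_\<psi>:
  "j \<in> {1..m} \<Longrightarrow> k \<in> {1..m} \<Longrightarrow>
     (LINT s|lborel. indicator (cube 0 B) s * (\<psi> j s * \<psi> k s)) = (if j = k then 1 else 0)"
  using orthonormal by (simp add: set_lebesgue_integral_def)

lemma integral_\<psi>_shift_\<psi>_shift:
  assumes "j \<in> {1..m}" and "k \<in> {1..m}"
  shows "(LINT s|lborel. \<psi> k (s - p) * \<psi> j (s - p)) = (if k = j then 1 else 0)"
proof -
  have "(\<lambda>s. \<psi> k s * \<psi> j s) \<in> borel_measurable borel"
    by (intro borel_measurable_continuous_onI continuous_on_mult continuous_\<psi> assms)
  from lborel_integral_translate[OF this, of p]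
  have "(LINT s|lborel. \<psi> k (s - p) * \<psi> j (s - p)) = (LINT s|lborel. \<psi> k s * \<psi> j s)"
    by simp
  also have "\<dots> = (if k = j then 1 else 0)"
    using assms by (simp add: integral_mult_\<psi>_eq_cube integral_cube_\<psi>_\<psi>)
  finally show ?thesis .
qed

lemma \<psi>_shift_mult_\<psi>_shift_eq_0:
  assumes "j \<in> {1..m}" and "k \<in> {1..m}" and "B \<le> infnorm (p - q)"
  shows "\<psi> k (s - p) * \<psi> j (s - q) = 0"
  using cube_translates_disjoint[OF assms(3), of s] \<psi>_eq_0 assms(1,2) by fastforce

lemma corr_superposition:
  fixes N :: nat and \<tau> :: "nat \<Rightarrow> real^'d" and a :: "nat \<Rightarrow> nat \<Rightarrow> real"
  assumes separated: "\<forall>l\<in>{1..N}. \<forall>i\<in>{1..N}. l \<noteq> i \<longrightarrow> B \<le> infnorm (\<tau> l - \<tau> i)"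
    and l: "l \<in> {1..N}" and j: "j \<in> {1..m}"
  shows "corr (\<lambda>t. \<Sum>i=1..N. \<Sum>k=1..m. a i k * \<psi> k (t - \<tau> i)) (\<psi> j) (\<tau> l) = a l j"
proof -
  have only_l: "(\<Sum>i=1..N. \<Sum>k=1..m. a i k * \<psi> k (s - \<tau> i)) * \<psi> j (s - \<tau> l)
      = (\<Sum>k=1..m. a l k * (\<psi> k (s - \<tau> l) * \<psi> j (s - \<tau> l)))" for s
  proof -
    have "(\<Sum>i=1..N. \<Sum>k=1..m. a i k * \<psi> k (s - \<tau> i)) * \<psi> j (s - \<tau> l)
        = (\<Sum>i=1..N. \<Sum>k=1..m. a i k * (\<psi> k (s - \<tau> i) * \<psi> j (s - \<tau> l)))"
      by (simp add: sum_distrib_right mult.assoc)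
    also have "\<dots> = (\<Sum>i\<in>{l}. \<Sum>k=1..m. a i k * (\<psi> k (s - \<tau> i) * \<psi> j (s - \<tau> l)))"
      using separated l j
      by (intro sum.mono_neutral_right) (auto simp: \<psi>_shift_mult_\<psi>_shift_eq_0)
    finally show ?thesis by simp
  qed
  have "corr (\<lambda>t. \<Sum>i=1..N. \<Sum>k=1..m. a i k * \<psi> k (t - \<tau> i)) (\<psi> j) (\<tau> l)
      = (LINT s|lborel. (\<Sum>k=1..m. a l k * (\<psi> k (s - \<tau> l) * \<psi> j (s - \<tau> l))))"
    unfolding corr_def only_l ..
  also have "\<dots> = (\<Sum>k=1..m. a l k * (LINT s|lborel. \<psi> k (s - \<tau> l) * \<psi> j (s - \<tau> l)))"
    using j by (subst Bochner_Integration.integral_sum)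
      (auto intro!: integrable_mult_right integrable_mult_\<psi>_shift continuous_\<psi>_shift)
  also have "\<dots> = (\<Sum>k=1..m. if k = j then a l k else 0)"
    using j by (intro sum.cong refl) (simp add: integral_\<psi>_shift_\<psi>_shift)
  also have "\<dots> = a l j"
    using j by simp
  finally show ?thesis .
qed

lemma Sfun_superposition:
  fixes N :: nat and \<tau> :: "nat \<Rightarrow> real^'d" and a :: "nat \<Rightarrow> nat \<Rightarrow> real"
  assumes "\<forall>l\<in>{1..N}. \<forall>i\<in>{1..N}. l \<noteq> i \<longrightarrow> B \<le> infnorm (\<tau> l - \<tau> i)" and "l \<in> {1..N}"
  shows "Sfun \<psi> m (\<lambda>t. \<Sum>i=1..N. \<Sum>k=1..m. a i k * \<psi> k (t - \<tau> i)) (\<tau> l) = (\<Sum>j=1..m. (a l j)\<^sup>2)"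
  unfolding Sfun_def using corr_superposition[OF assms] by simp

lemma integral_cube_mult_combination:
  assumes "continuous_on UNIV g"
  shows "(LINT s|lborel. indicator (cube 0 B) s * (g s * (\<Sum>j=1..m. c j * \<psi> j s)))
       = (\<Sum>j=1..m. c j * (LINT s|lborel. indicator (cube 0 B) s * (g s * \<psi> j s)))"
proof -
  have "(\<lambda>s. indicator (cube 0 B) s * (g s * (\<Sum>j=1..m. c j * \<psi> j s)))
      = (\<lambda>s. \<Sum>j=1..m. c j * (indicator (cube 0 B) s * (g s * \<psi> j s)))"
    by (simp add: fun_eq_iff sum_distrib_left mult_ac)
  then show ?thesis
    by (simp, subst Bochner_Integration.integral_sum)
      (auto intro!: integrable_mult_right integrable_indicator_continuous continuous_on_mult
        assms continuous_\<psi> bounded_cube_0)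
qed

lemma bessel_inequality_Sfun:
  assumes f: "continuous_on UNIV f"
  shows "Sfun \<psi> m f 0 \<le> (LINT s|lborel. indicator (cube 0 B) s * (f s)\<^sup>2)"
proof -
  let ?I = "\<lambda>h. LINT s|lborel. indicator (cube 0 B) s * h s"
  define c where "c j = corr f (\<psi> j) 0" for j
  define g where "g s = (\<Sum>j=1..m. c j * \<psi> j s)" for s
  have g: "continuous_on UNIV g"
    unfolding g_def by (intro continuous_on_sum continuous_on_mult continuous_on_const continuous_\<psi>) auto
  have c: "?I (\<lambda>s. f s * \<psi> j s) = c j" if "j \<in> {1..m}" for j
    unfolding c_def corr_def using integral_mult_\<psi>_eq_cube[OF that] by simp
  have \<psi>_g: "?I (\<lambda>s. \<psi> k s * g s) = c k" if k: "k \<in> {1..m}" for k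
  proof -
    have "?I (\<lambda>s. \<psi> k s * g s) = (\<Sum>j=1..m. if j = k then c j else 0)"
      unfolding g_def integral_cube_mult_combination[OF continuous_\<psi>[OF k]]
      using k by (intro sum.cong refl) (simp add: integral_cube_\<psi>_\<psi>)
    then show ?thesis
      using k by simp
  qed
  have f_g: "?I (\<lambda>s. f s * g s) = (\<Sum>j=1..m. (c j)\<^sup>2)"
    unfolding g_def integral_cube_mult_combination[OF f]
    by (intro sum.cong refl) (simp add: c power2_eq_square)
  have "?I (\<lambda>s. g s * g s) = (\<Sum>j=1..m. c j * ?I (\<lambda>s. g s * \<psi> j s))"
    using integral_cube_mult_combination[OF g, of c] unfolding g_def[symmetric] .
  also have "\<dots> = (\<Sum>j=1..m. (c j)\<^sup>2)"
    by (intro sum.cong refl) (simp add: mult.commute[of "g _"] \<psi>_g power2_eq_square)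
  finally have g_g: "?I (\<lambda>s. g s * g s) = (\<Sum>j=1..m. (c j)\<^sup>2)" .
  have "0 \<le> ?I (\<lambda>s. (f s - g s)\<^sup>2)"
    by (intro integral_nonneg_AE) auto
  also have "\<dots> = ?I (\<lambda>s. (f s)\<^sup>2) - 2 * ?I (\<lambda>s. f s * g s) + ?I (\<lambda>s. g s * g s)"
  proof -
    have "(\<lambda>s. indicator (cube 0 B) s * (f s - g s)\<^sup>2)
        = (\<lambda>s. indicator (cube 0 B) s * (f s)\<^sup>2 - 2 * (indicator (cube 0 B) s * (f s * g s))
               + indicator (cube 0 B) s * (g s * g s))"
      by (simp add: fun_eq_iff power2_eq_square algebra_simps)
    moreover have "integrable lborel (\<lambda>s. indicator (cube 0 B) s * h s)"
      if "continuous_on UNIV h" for h :: "real^'d \<Rightarrow> real"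
      using integrable_indicator_continuous[OF that bounded_cube_0 cube_0_sets] .
    moreover have "continuous_on UNIV (\<lambda>s. (f s)\<^sup>2)" "continuous_on UNIV (\<lambda>s. f s * g s)"
      "continuous_on UNIV (\<lambda>s. g s * g s)"
      using f g by (auto intro: continuous_intros)
    ultimately show ?thesis
      by simp
  qed
  finally show ?thesis
    unfolding f_g g_g Sfun_def c_def by simp
qed

end

section \<open>Filtered stationary noise\<close>

locale continuous_stationary_L2_process = prob_space M for M :: "'w measure" +
  fixes z :: "real^'d \<Rightarrow> 'w \<Rightarrow> real"
  assumes stationary: "stationary_process M z"
    and measurable_z [measurable]: "\<And>t. z t \<in> borel_measurable M"
    and square_integrable_z: "\<And>t. integrable M (\<lambda>\<omega>. (z t \<omega>)\<^sup>2)"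
    and continuous_paths: "\<And>\<omega>. \<omega> \<in> space M \<Longrightarrow> continuous_on UNIV (\<lambda>t. z t \<omega>)"

locale noisy_cube_system =
  orthonormal_cube_system \<psi> m B + continuous_stationary_L2_process M z
  for \<psi> :: "nat \<Rightarrow> real^'d \<Rightarrow> real" and m B and M :: "'w measure" and z :: "real^'d \<Rightarrow> 'w \<Rightarrow> real"
begin

lemma corr_noise_eq:
  assumes "\<omega> \<in> space M" and "j \<in> {1..m}"
  shows "corr (\<lambda>s. z s \<omega>) (\<psi> j) \<tau> = (LINT s|lborel. z (s + \<tau>) \<omega> * \<psi> j s)"
proof -
  have "(\<lambda>s. z (s + \<tau>) \<omega> * \<psi> j s) \<in> borel_measurable borel"
    using assms
    by (intro borel_measurable_continuous_onI continuous_on_mult continuous_\<psi>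
        continuous_on_compose2[OF continuous_paths]) (auto intro!: continuous_intros)
  from lborel_integral_translate[OF this, of \<tau>] show ?thesis
    by (simp add: corr_def)
qed

lemma
  assumes j: "j \<in> {1..m}"
  shows integrable_corr_noise_square: "integrable M (\<lambda>\<omega>. (corr (\<lambda>s. z s \<omega>) (\<psi> j) \<tau>)\<^sup>2)"
    and expectation_corr_noise_square:
      "expectation (\<lambda>\<omega>. (corr (\<lambda>s. z s \<omega>) (\<psi> j) \<tau>)\<^sup>2)
     = (LINT x|(lborel \<Otimes>\<^sub>M lborel). \<psi> j (fst x) * \<psi> j (snd x) * expectation (\<lambda>\<omega>. z (fst x) \<omega> * z (snd x) \<omega>))"
proof -
  have shifted_paths: "continuous_on UNIV (\<lambda>s. z (s + \<tau>) \<omega>)" if "\<omega> \<in> space M" for \<omega>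
    by (rule continuous_on_compose2[OF continuous_paths[OF that]]) (auto intro!: continuous_intros)
  have W: "(\<lambda>x. z (snd x + \<tau>) (fst x)) \<in> borel_measurable (M \<Otimes>\<^sub>M lborel)"
    using borel_measurable_continuous_paths[of "\<lambda>s. z (s + \<tau>)"] shifted_paths by simp
  have \<psi>: "integrable lborel (\<psi> j)"
    using integrable_mult_\<psi>_shift[OF j, of "\<lambda>_. 1" 0] by simp
  have path_integrable: "integrable lborel (\<lambda>s. z (s + \<tau>) \<omega> * \<psi> j s)" if "\<omega> \<in> space M" for \<omega>
    using integrable_mult_\<psi>_shift[OF j shifted_paths[OF that], of 0] by simp
  have bounded: "expectation (\<lambda>\<omega>. (z (s + \<tau>) \<omega>)\<^sup>2) \<le> expectation (\<lambda>\<omega>. (z 0 \<omega>)\<^sup>2)" for s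
    using stationary_process_square_moment[OF stationary measurable_z, of "s + \<tau>"] by simp
  note second_moment =
    integrable_square_path_integral[OF W square_integrable_z bounded \<psi> path_integrable]
    expectation_square_path_integral[OF W square_integrable_z bounded \<psi> path_integrable]
  have corr: "(corr (\<lambda>s. z s \<omega>) (\<psi> j) \<tau>)\<^sup>2 = (LINT s|lborel. z (s + \<tau>) \<omega> * \<psi> j s)\<^sup>2"
    if "\<omega> \<in> space M" for \<omega>
    using corr_noise_eq[OF that j] by simp
  show "integrable M (\<lambda>\<omega>. (corr (\<lambda>s. z s \<omega>) (\<psi> j) \<tau>)\<^sup>2)"
    using second_moment(1) corr by (simp cong: Bochner_Integration.integrable_cong)
  have "expectation (\<lambda>\<omega>. (corr (\<lambda>s. z s \<omega>) (\<psi> j) \<tau>)\<^sup>2)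
      = expectation (\<lambda>\<omega>. (LINT s|lborel. z (s + \<tau>) \<omega> * \<psi> j s)\<^sup>2)"
    using corr by (intro Bochner_Integration.integral_cong) auto
  also have "\<dots> = (LINT x|(lborel \<Otimes>\<^sub>M lborel).
      \<psi> j (fst x) * \<psi> j (snd x) * expectation (\<lambda>\<omega>. z (fst x + \<tau>) \<omega> * z (snd x + \<tau>) \<omega>))"
    by (rule second_moment(2))
  also have "\<dots> = (LINT x|(lborel \<Otimes>\<^sub>M lborel).
      \<psi> j (fst x) * \<psi> j (snd x) * expectation (\<lambda>\<omega>. z (fst x) \<omega> * z (snd x) \<omega>))"
    by (simp add: stationary_process_covariance_shift[OF stationary measurable_z])
  finally show "expectation (\<lambda>\<omega>. (corr (\<lambda>s. z s \<omega>) (\<psi> j) \<tau>)\<^sup>2)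
     = (LINT x|(lborel \<Otimes>\<^sub>M lborel). \<psi> j (fst x) * \<psi> j (snd x) * expectation (\<lambda>\<omega>. z (fst x) \<omega> * z (snd x) \<omega>))" .
qed

lemma integrable_Sfun_noise: "integrable M (\<lambda>\<omega>. Sfun \<psi> m (\<lambda>s. z s \<omega>) \<tau>)"
  unfolding Sfun_def by (intro Bochner_Integration.integrable_sum integrable_corr_noise_square) auto

lemma expectation_Sfun_noise_shift:
  "expectation (\<lambda>\<omega>. Sfun \<psi> m (\<lambda>s. z s \<omega>) \<tau>) = expectation (\<lambda>\<omega>. Sfun \<psi> m (\<lambda>s. z s \<omega>) 0)"
  unfolding Sfun_def
  by (simp add: Bochner_Integration.integral_sum integrable_corr_noise_square
      expectation_corr_noise_square)

lemma expectation_Sfun_noise_le: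
  assumes "0 < B"
  shows "expectation (\<lambda>\<omega>. Sfun \<psi> m (\<lambda>s. z s \<omega>) 0) \<le> expectation (\<lambda>\<omega>. (z 0 \<omega>)\<^sup>2) * B ^ CARD('d)"
proof -
  let ?C = "cube (0::real^'d) B" and ?\<sigma>2 = "expectation (\<lambda>\<omega>. (z 0 \<omega>)\<^sup>2)"
  interpret P: pair_sigma_finite M "lborel :: (real^'d) measure"
    by (intro pair_sigma_finite.intro sigma_finite_measure_axioms) unfold_locales
  have [measurable]: "(\<lambda>x. z (snd x) (fst x)) \<in> borel_measurable (M \<Otimes>\<^sub>M lborel)"
    by (rule borel_measurable_continuous_paths[OF measurable_z continuous_paths])
  have \<sigma>2: "expectation (\<lambda>\<omega>. (z s \<omega>)\<^sup>2) = ?\<sigma>2" for s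
    by (rule stationary_process_square_moment[OF stationary measurable_z])
  have "ennreal (expectation (\<lambda>\<omega>. Sfun \<psi> m (\<lambda>s. z s \<omega>) 0))
      = (\<integral>\<^sup>+\<omega>. ennreal (Sfun \<psi> m (\<lambda>s. z s \<omega>) 0) \<partial>M)"
    by (rule nn_integral_eq_integral[symmetric, OF integrable_Sfun_noise]) (auto simp: Sfun_def intro!: sum_nonneg)
  also have "\<dots> \<le> (\<integral>\<^sup>+\<omega>. \<integral>\<^sup>+s. ennreal (indicator ?C s * (z s \<omega>)\<^sup>2) \<partial>lborel \<partial>M)"
  proof (intro nn_integral_mono)
    fix \<omega> assume "\<omega> \<in> space M"
    then have "continuous_on UNIV (\<lambda>s. z s \<omega>)" by (rule continuous_paths)
    then show "ennreal (Sfun \<psi> m (\<lambda>s. z s \<omega>) 0) \<le> (\<integral>\<^sup>+s. ennreal (indicator ?C s * (z s \<omega>)\<^sup>2) \<partial>lborel)"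
      by (subst nn_integral_eq_integral)
        (auto intro!: ennreal_leI bessel_inequality_Sfun integrable_indicator_continuous
          continuous_intros bounded_cube_0)
  qed
  also have "\<dots> = (\<integral>\<^sup>+s. \<integral>\<^sup>+\<omega>. ennreal (indicator ?C s * (z s \<omega>)\<^sup>2) \<partial>M \<partial>lborel)"
    by (rule P.Fubini'[symmetric]) (simp add: case_prod_beta)
  also have "\<dots> = (\<integral>\<^sup>+s. ennreal ?\<sigma>2 * indicator ?C s \<partial>lborel)"
  proof (intro nn_integral_cong)
    fix s :: "real^'d"
    show "(\<integral>\<^sup>+\<omega>. ennreal (indicator ?C s * (z s \<omega>)\<^sup>2) \<partial>M) = ennreal ?\<sigma>2 * indicator ?C s"
      using square_integrable_z[of s] \<sigma>2[of s]
      by (subst nn_integral_eq_integral) (auto simp: indicator_def)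
  qed
  also have "\<dots> = ennreal (?\<sigma>2 * B ^ CARD('d))"
    using assms by (simp add: nn_integral_cmult_indicator emeasure_cube_0 ennreal_mult)
  finally show ?thesis
    using assms by (subst (asm) ennreal_le_iff) auto
qed

end

theorem claimA2:
  fixes M :: "'w measure" and z :: "real^'d \<Rightarrow> 'w \<Rightarrow> real"
    and \<psi> :: "nat \<Rightarrow> real^'d \<Rightarrow> real" and m :: nat
    and \<tau> :: "nat \<Rightarrow> real^'d" and a :: "nat \<Rightarrow> nat \<Rightarrow> real" and N :: nat and B :: real
  assumes "prob_space M"
    and "centered_gaussian_process M z"
    and "stationary_process M z"
    and "\<forall>\<omega>\<in>space M. continuous_on UNIV (\<lambda>t. z t \<omega>)"
    and "\<forall>j\<in>{1..m}. smooth_fun (\<psi> j)"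
    and "\<forall>j\<in>{1..m}. \<forall>t. t \<notin> cube 0 B \<longrightarrow> \<psi> j t = 0"
    and "\<forall>j\<in>{1..m}. \<forall>k\<in>{1..m}.
           (LINT t:cube 0 B|lborel. \<psi> j t * \<psi> k t) = (if j = k then 1 else 0)"
    and "\<forall>l\<in>{1..N}. \<forall>i\<in>{1..N}. l \<noteq> i \<longrightarrow> infnorm (\<tau> l - \<tau> i) \<ge> B"
    and "(LINT \<omega>|M. Sfun \<psi> m (\<lambda>s. z s \<omega>) 0) > 0"
  shows "\<exists>\<gamma>\<ge>1. \<forall>l\<in>{1..N}.
     (let x = (\<lambda>t. \<Sum>i=1..N. \<Sum>j=1..m. a i j * \<psi> j (t - \<tau> i));
          \<sigma>2 = (LINT \<omega>|M. (z 0 \<omega>)\<^sup>2);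
          SNR_y = (\<Sum>j=1..m. (a l j)\<^sup>2) / (\<sigma>2 * B ^ CARD('d));
          SNR_Sy = Sfun \<psi> m x (\<tau> l) / (LINT \<omega>|M. Sfun \<psi> m (\<lambda>s. z s \<omega>) (\<tau> l))
      in SNR_Sy = \<gamma> * SNR_y)"
proof -
  interpret prob_space M by fact
  interpret noisy_cube_system \<psi> m B M z
    using assms centered_gaussian_process_rv[OF assms(2)]
    by unfold_locales (auto simp: centered_gaussian_rv_def smooth_fun_continuous
        intro: centered_gaussian_rv_square_integrable)
  define Q where "Q = expectation (\<lambda>\<omega>. Sfun \<psi> m (\<lambda>s. z s \<omega>) 0)"
  define V where "V = expectation (\<lambda>\<omega>. (z 0 \<omega>)\<^sup>2) * B ^ CARD('d)"
  have "Q > 0" using assms(9) by (simp add: Q_def)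
  then have "1 \<le> m"
    by (cases m) (auto simp: Q_def Sfun_def)
  then have "Q \<le> V"
    unfolding Q_def V_def by (intro expectation_Sfun_noise_le B_pos)
  with \<open>Q > 0\<close> show ?thesis
    using Sfun_superposition[OF assms(8)] expectation_Sfun_noise_shift
    by (intro exI[of _ "V / Q"]) (simp add: Let_def Q_def[symmetric] V_def[symmetric])
qed

end
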